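(* Let $p,q>0$ and $\alpha,\beta,\nu,\gamma\in\mathbb{R}$. Let $a,a^{\dagger},N,K$ be elements of an associative unital algebra satisfying $$aa^{\dagger}-p^{\nu}a^{\dagger}a=(1+2\gamma K)\,q^{\alpha N+\beta},\qquad [N,a^{\dagger}]=a^{\dagger},\qquad Ka^{\dagger}=-a^{\dagger}K,$$ where $q^{\alpha N+\beta}$ is an element such that, as a consequence of $[N,a^\dagger]=a^\dagger$, $q^{\alpha N+\beta}a^{\dagger}=a^{\dagger}q^{\alpha(N+1)+\beta}=q^{\alpha}\,a^{\dagger}q^{\alpha N+\beta}$. Then for every integer $n\geq 1$, $$a(a^{\dagger})^{n}-p^{n\nu}(a^{\dagger})^{n}a=[n;\alpha,\beta,\nu;\gamma K]\,(a^{\dagger})^{n-1}q^{\alpha N+\beta},$$ where $$[n;\alpha,\beta,\nu;\gamma K]=\begin{cases}\dfrac{p^{n\nu}-q^{n\alpha}}{p^{\nu}-q^{\alpha}}+2\gamma K\,\dfrac{q^{n\alpha}-(-1)^{n}p^{n\nu}}{p^{\nu}+q^{\alpha}}, & \text{if } p^{\nu}\neq q^{\alpha},\\[2ex] nq^{\alpha(n-1)}+2\gamma K\,q^{\alpha(n-1)}\,\dfrac{1-(-1)^{n}}{2}, & \text{if } p^{\nu}=q^{\alpha}.\end{cases}$$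
   Context: These are relations of the $(p,q;\alpha,\beta,\nu;\gamma)$-deformed oscillator algebra generated by $a,a^{\dagger},N,K$ with $aa^{\dagger}-p^{\nu}a^{\dagger}a=(1+2\gamma K)q^{\alpha N+\beta}$, $[N,a]=-a$, $[N,a^\dagger]=a^\dagger$, $Ka=-aK$, $Ka^\dagger=-a^\dagger K$, $[N,K]=0$. Scalars are identified with multiples of the unit. *)

theory Defs
  imports Complex_Main
begin

text \<open>The deformed number [n;alpha,beta,nu;gamma K] as an element of the algebra
  (it does not actually depend on beta). Scalars c are identified with c *R 1.\<close>
definition defnum ::
  "real \<Rightarrow> real \<Rightarrow> real \<Rightarrow> real \<Rightarrow> real \<Rightarrow> 'a::real_algebra_1 \<Rightarrow> nat \<Rightarrow> 'a" where
  "defnum p q \<alpha> \<nu> \<gamma> K n =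
    (if p powr \<nu> \<noteq> q powr \<alpha> then
       ((p powr (real n * \<nu>) - q powr (real n * \<alpha>)) / (p powr \<nu> - q powr \<alpha>)) *\<^sub>R 1
       + (2 * \<gamma>) *\<^sub>R K *
         (((q powr (real n * \<alpha>) - (-1) ^ n * p powr (real n * \<nu>)) / (p powr \<nu> + q powr \<alpha>)) *\<^sub>R 1)
     else
       (real n * q powr (\<alpha> * (real n - 1))) *\<^sub>R 1
       + (2 * \<gamma>) *\<^sub>R K * ((q powr (\<alpha> * (real n - 1)) * (1 - (-1) ^ n) / 2) *\<^sub>R 1))"

end

theory Submission
  imports Defs
begin

text \<open>Write P = p^\<nu>, R = q^\<alpha>, C = 2\<gamma>K and X(n) = a ad^n - P^n ad^n a. Then
  X(n+1) = X(n) ad + P^n ad^n (1 + C) Q. Commuting Q past ad produces a factor R and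
  commuting C past ad^n a sign (-1)^n, so X(n) = ([n]_{P,R} + [n]_{-P,R} C) ad^(n-1) Q,
  where [n]_{P,R} = \<Sum>k<n. P^k R^(n-1-k). The two cases of the deformed number are the closed
  forms of these geometric sums for P \<noteq> R and for P = R.\<close>

fun pr_number :: "real \<Rightarrow> real \<Rightarrow> nat \<Rightarrow> real" where
  "pr_number P R 0 = 0"
| "pr_number P R (Suc n) = R * pr_number P R n + P ^ n"

lemma pr_number_mult_diff: "pr_number P R n * (P - R) = P ^ n - R ^ n"
proof (induction n)
  case (Suc n)
  have "pr_number P R (Suc n) * (P - R) = R * (pr_number P R n * (P - R)) + P ^ n * (P - R)"
    by (simp add: algebra_simps)
  also have "\<dots> = R * (P ^ n - R ^ n) + P ^ n * (P - R)"
    by (simp only: Suc.IH)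
  finally show ?case by (simp add: algebra_simps)
qed simp

lemma pr_number_eq_divide: "P \<noteq> R \<Longrightarrow> pr_number P R n = (P ^ n - R ^ n) / (P - R)"
  using pr_number_mult_diff[of P R n] by (simp add: field_simps)

lemma pr_number_same: "pr_number P P (Suc n) = real (Suc n) * P ^ n"
  by (induction n) (simp_all add: algebra_simps)

lemma pr_number_opposite: "pr_number (- P) P (Suc n) = P ^ n * (1 - (-1) ^ Suc n) / 2"
proof (induction n)
  case (Suc n)
  have "pr_number (- P) P (Suc (Suc n)) = P * pr_number (- P) P (Suc n) + (- P) ^ Suc n"
    by (rule pr_number.simps(2))
  also have "\<dots> = P * (P ^ n * (1 - (-1) ^ Suc n) / 2) + (-1) ^ Suc n * P ^ Suc n"
    by (simp only: Suc.IH power_minus[of P "Suc n"])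
  finally show ?case by (simp add: algebra_simps)
qed simp

lemma power_mult_anticommute:
  fixes C x :: "'a::real_algebra_1"
  assumes "C * x = - (x * C)"
  shows "x ^ n * C = ((-1) ^ n) *\<^sub>R (C * x ^ n)"
proof (induction n)
  case (Suc n)
  have "x ^ Suc n * C = ((-1) ^ n) *\<^sub>R (x * C * x ^ n)"
    using Suc by (simp add: mult.assoc)
  also have "x * C = - (C * x)" using assms by simp
  finally show ?case by (simp add: mult.assoc power_commutes)
qed simp

lemma deformed_commutator_power:
  fixes a x C Q :: "'a::real_algebra_1"
  assumes comm: "a * x - P *\<^sub>R (x * a) = (1 + C) * Q"
    and CX: "C * x = - (x * C)"
    and QX: "Q * x = R *\<^sub>R (x * Q)"
  shows "a * x ^ Suc n - (P ^ Suc n) *\<^sub>R (x ^ Suc n * a)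
         = (pr_number P R (Suc n) *\<^sub>R 1 + pr_number (- P) R (Suc n) *\<^sub>R C) * x ^ n * Q"
proof (induction n)
  case 0
  then show ?case using comm by (simp add: algebra_simps)
next
  case (Suc n)
  define X where "X = a * x ^ Suc n - (P ^ Suc n) *\<^sub>R (x ^ Suc n * a)"
  define D where "D = pr_number P R (Suc n) *\<^sub>R 1 + pr_number (- P) R (Suc n) *\<^sub>R C"
  have "a * x ^ Suc (Suc n) - (P ^ Suc (Suc n)) *\<^sub>R (x ^ Suc (Suc n) * a)
      = X * x + (P ^ Suc n) *\<^sub>R (x ^ Suc n * (a * x - P *\<^sub>R (x * a)))"
    unfolding X_def by (simp only: power_Suc2[of x "Suc n"]) (simp add: algebra_simps)
  also have "\<dots> = X * x + (P ^ Suc n) *\<^sub>R (x ^ Suc n * Q + x ^ Suc n * C * Q)"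
    by (simp add: comm algebra_simps)
  also have "x ^ Suc n * C = ((-1) ^ Suc n) *\<^sub>R (C * x ^ Suc n)"
    by (rule power_mult_anticommute[OF CX])
  also have "X * x = D * x ^ n * (Q * x)"
    unfolding X_def D_def Suc.IH by (simp only: mult.assoc)
  also have "\<dots> = R *\<^sub>R (D * x ^ Suc n * Q)"
    by (simp add: QX mult.assoc power_Suc2 del: power_Suc)
  finally show ?case
    unfolding D_def by (simp add: algebra_simps power_minus[of P n])
qed

lemma powr_real_mult: "0 < p \<Longrightarrow> p powr (real n * v) = (p powr v) ^ n"
  by (metis powr_powr powr_realpow powr_gt_zero mult.commute)

lemma defnum_eq_pr_numbers:
  fixes p q \<alpha> \<nu> \<gamma> :: real and K :: "'a::real_algebra_1"
  assumes "p > 0" and "q > 0"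
  defines "P \<equiv> p powr \<nu>" and "R \<equiv> q powr \<alpha>"
  shows "defnum p q \<alpha> \<nu> \<gamma> K n
         = pr_number P R n *\<^sub>R 1 + pr_number (- P) R n *\<^sub>R ((2 * \<gamma>) *\<^sub>R K)"
proof (cases n)
  case (Suc m)
  have scale: "\<And>s. (2 * \<gamma>) *\<^sub>R K * (s *\<^sub>R 1) = s *\<^sub>R ((2 * \<gamma>) *\<^sub>R K)"
    by (metis mult.right_neutral mult_scaleR_right)
  have pw: "p powr (real n * \<nu>) = P ^ n" "q powr (real n * \<alpha>) = R ^ n"
    "q powr (\<alpha> * (real n - 1)) = R ^ m"
    using powr_real_mult[OF \<open>p > 0\<close>, of n \<nu>] powr_real_mult[OF \<open>q > 0\<close>, of n \<alpha>]
      powr_real_mult[OF \<open>q > 0\<close>, of m \<alpha>]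
    by (simp_all add: P_def R_def Suc mult.commute)
  show ?thesis
  proof (cases "P = R")
    case True
    then show ?thesis
      unfolding defnum_def scale pw P_def[symmetric] R_def[symmetric]
      by (simp add: Suc pr_number_same pr_number_opposite del: pr_number.simps)
  next
    case False
    have "P + R > 0" unfolding P_def R_def using \<open>p > 0\<close> \<open>q > 0\<close> by (auto intro: add_pos_pos)
    then have "pr_number (- P) R n = (R ^ n - (-1) ^ n * P ^ n) / (P + R)"
      using pr_number_eq_divide[of "- P" R n] power_minus[of P n] by (simp add: field_simps)
    with False show ?thesis
      unfolding defnum_def scale pw P_def[symmetric] R_def[symmetric]
      by (simp add: pr_number_eq_divide del: pr_number.simps)
  qed
qed (use \<open>p > 0\<close> \<open>q > 0\<close> in \<open>simp add: defnum_def\<close>)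

theorem proposition3:
  fixes p q \<alpha> \<beta> \<nu> \<gamma> :: real
    and a ad N K Q :: "'a::real_algebra_1"
  assumes "p > 0" and "q > 0"
    and comm: "a * ad - (p powr \<nu>) *\<^sub>R (ad * a) = (1 + (2 * \<gamma>) *\<^sub>R K) * Q"
    and NA: "N * ad - ad * N = ad"
    and KA: "K * ad = - (ad * K)"
    and QA: "Q * ad = (q powr \<alpha>) *\<^sub>R (ad * Q)"
    and "n \<ge> 1"
  shows "a * ad ^ n - (p powr (real n * \<nu>)) *\<^sub>R (ad ^ n * a)
         = defnum p q \<alpha> \<nu> \<gamma> K n * ad ^ (n - 1) * Q"
proof -
  obtain m where n: "n = Suc m" using \<open>n \<ge> 1\<close> by (cases n) auto
  have "(2 * \<gamma>) *\<^sub>R K * ad = - (ad * ((2 * \<gamma>) *\<^sub>R K))"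
    using KA by simp
  from deformed_commutator_power[OF comm this QA, of m]
  show ?thesis
    unfolding defnum_eq_pr_numbers[OF \<open>p > 0\<close> \<open>q > 0\<close>] powr_real_mult[OF \<open>p > 0\<close>] n
    by simp
qed

end
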